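(* Assume the vector variational inequality defined by $F$ and $K$ is monotone and that $\mathrm{Sol}^w(F,K)$ is bounded and nonempty. Then (a) $\mathrm{Sol}^w(F,K)$ is connected; and (b) the domain of the basic multifunction is all of $\Delta$, i.e., $\mathrm{Sol}(F_\xi,K)\neq\emptyset$ for every $\xi\in\Delta$.
   Context: Let $K\subset\mathbb{R}^n$ be a nonempty closed convex set and $F_1,\dots,F_m:K\to\mathbb{R}^n$ continuous functions; write $F=(F_1,\dots,F_m)$ and $F(x)(u)=(\langle F_1(x),u\rangle,\dots,\langle F_m(x),u\rangle)$. The problem is monotone if each $F_l$ is monotone on $K$: $\langle F_l(y)-F_l(x),y-x\rangle\ge0$ for all $x,y\in K$. Let $\Delta=\{\xi\in\mathbb{R}^m_+:\sum_l\xi_l=1\}$ and $F_\xi=\sum_l\xi_lF_l$. For $G:K\to\mathbb{R}^n$, $\mathrm{Sol}(G,K)=\{x\in K:\langle G(x),y-x\rangle\ge0\ \forall y\in K\}$. The basic multifunction is $S:\Delta\rightrightarrows\mathbb{R}^n$, $S(\xi)=\mathrm{Sol}(F_\xi,K)$. The weak Pareto solution set $\mathrm{Sol}^w(F,K)$ is the set of $x\in K$ such that $F(x)(x-y)\notin\operatorname{int}\mathbb{R}^m_+$ for all $y\in K$. *)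

theory Defs
  imports "HOL-Analysis.Analysis"
begin

definition Sol :: "('a::real_inner \<Rightarrow> 'a) \<Rightarrow> 'a set \<Rightarrow> 'a set" where
  "Sol G K = {x \<in> K. \<forall>y\<in>K. inner (G x) (y - x) \<ge> 0}"

definition vecF :: "('m::finite \<Rightarrow> real^'n \<Rightarrow> real^'n) \<Rightarrow> real^'n \<Rightarrow> real^'n \<Rightarrow> real^'m" where
  "vecF F x u = (\<chi> l. inner (F l x) u)"

definition nonneg_orthant :: "(real^'m::finite) set" where
  "nonneg_orthant = {v. \<forall>l. v $ l \<ge> 0}"

definition SolW :: "('m::finite \<Rightarrow> real^'n \<Rightarrow> real^'n) \<Rightarrow> (real^'n) set \<Rightarrow> (real^'n) set" where
  "SolW F K = {x \<in> K. \<forall>y\<in>K. vecF F x (x - y) \<notin> interior nonneg_orthant}"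

definition simplex_Delta :: "('m::finite \<Rightarrow> real) set" where
  "simplex_Delta = {\<xi>. (\<forall>l. \<xi> l \<ge> 0) \<and> (\<Sum>l\<in>UNIV. \<xi> l) = 1}"

definition Fxi :: "('m::finite \<Rightarrow> 'a \<Rightarrow> 'a::real_vector) \<Rightarrow> ('m \<Rightarrow> real) \<Rightarrow> 'a \<Rightarrow> 'a" where
  "Fxi F \<xi> x = (\<Sum>l\<in>UNIV. \<xi> l *\<^sub>R F l x)"

definition monotone_on_set :: "('a::real_inner \<Rightarrow> 'a) \<Rightarrow> 'a set \<Rightarrow> bool" where
  "monotone_on_set G K \<longleftrightarrow> (\<forall>x\<in>K. \<forall>y\<in>K. inner (G y - G x) (y - x) \<ge> 0)"

end

theory Submission
  imports Defs
begin

text \<open>For monotone continuous \<open>G\<close> on a closed convex \<open>K\<close>, VI(\<open>G\<close>,\<open>K\<close>) has no solution exactly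
  when some unit recession direction \<open>d\<close> of \<open>K\<close> satisfies \<open>\<langle>G y, d\<rangle> \<le> 0\<close> on \<open>K\<close>, and such a
  direction makes a nonempty solution set unbounded. The weak Pareto solutions are the union of
  the solution sets of the scalarized problems VI(\<open>F\<^sub>\<xi>\<close>,\<open>K\<close>), \<open>\<xi> \<in> \<Delta>\<close>. Fix one solution \<open>x\<^sub>0\<close>
  for weights \<open>\<xi>\<^sub>0\<close> and move the weights along the segment from \<open>\<xi>\<^sub>0\<close> to \<open>\<xi>\<close>: every solution
  set met lies in the bounded set of weak Pareto solutions, so the solution graph over \<open>[0,1]\<close> is
  compact, the parameters with solutions and those with such a bad direction are complementary
  closed subsets of \<open>[0,1]\<close>, and hence every parameter has solutions; this is (b). The solution
  sets are convex, so their union along the segment is connected; these unions all contain \<open>x\<^sub>0\<close>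
  and cover the weak Pareto solutions, which gives (a).\<close>

lemma monotone_on_set_subset:
  "monotone_on_set G K \<Longrightarrow> K' \<subseteq> K \<Longrightarrow> monotone_on_set G K'"
  unfolding monotone_on_set_def by blast

lemma Sol_imp_Minty:
  fixes G :: "'a::real_inner \<Rightarrow> 'a"
  assumes "monotone_on_set G K" "x \<in> Sol G K" "y \<in> K"
  shows "inner (G y) (y - x) \<ge> 0"
proof -
  have "x \<in> K" "inner (G x) (y - x) \<ge> 0"
    using assms(2,3) by (auto simp: Sol_def)
  moreover have "inner (G y - G x) (y - x) \<ge> 0"
    using assms(1,3) \<open>x \<in> K\<close> by (auto simp: monotone_on_set_def)
  ultimately show ?thesis by (simp add: inner_diff_left)
qed

lemma Minty_imp_Sol:
  fixes G :: "'a::real_inner \<Rightarrow> 'a"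
  assumes "convex K" "continuous_on K G" "x \<in> K"
    and Minty: "\<And>y. y \<in> K \<Longrightarrow> inner (G y) (y - x) \<ge> 0"
  shows "x \<in> Sol G K"
  unfolding Sol_def
proof (intro CollectI conjI ballI)
  show "x \<in> K" by fact
  fix y assume y: "y \<in> K"
  define f where "f t = inner (G (x + t *\<^sub>R (y - x))) (y - x)" for t
  have seg: "x + t *\<^sub>R (y - x) \<in> K" if "t \<in> {0..1}" for t
  proof -
    have "x + t *\<^sub>R (y - x) = (1 - t) *\<^sub>R x + t *\<^sub>R y" by (simp add: algebra_simps)
    then show ?thesis using convexD_alt[OF assms(1,3) y, of t] that by simp
  qed
  have "continuous_on {0..1} f"
    unfolding f_def
    by (intro continuous_intros continuous_on_compose2[OF assms(2)]) (auto intro: seg)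
  then have "closed {t \<in> {0..1}. 0 \<le> f t}"
    by (rule continuous_on_closed_Collect_le[OF continuous_on_const]) auto
  moreover have "{0<..1} \<subseteq> {t \<in> {0..1}. 0 \<le> f t}"
  proof
    fix t :: real assume t: "t \<in> {0<..1}"
    have "0 \<le> inner (G (x + t *\<^sub>R (y - x))) (x + t *\<^sub>R (y - x) - x)"
      using Minty[OF seg] t by auto
    then have "0 \<le> t * f t" by (simp add: f_def inner_scaleR_right)
    with t show "t \<in> {t \<in> {0..1}. 0 \<le> f t}" by (auto simp: zero_le_mult_iff)
  qed
  ultimately have "closure {0<..1} \<subseteq> {t \<in> {0..1}. 0 \<le> f t}"
    by (rule closure_minimal[rotated])
  moreover have "(0::real) \<in> closure {0<..1}" by simp
  ultimately have "0 \<le> f 0" by blast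
  then show "0 \<le> inner (G x) (y - x)" by (simp add: f_def)
qed

lemma convex_Sol:
  fixes G :: "'a::real_inner \<Rightarrow> 'a"
  assumes "convex K" "continuous_on K G" "monotone_on_set G K"
  shows "convex (Sol G K)"
  unfolding convex_def
proof (intro ballI allI impI)
  fix x y u v
  assume xy: "x \<in> Sol G K" "y \<in> Sol G K" and uv: "(0::real) \<le> u" "0 \<le> v" "u + v = 1"
  have "x \<in> K" "y \<in> K" using xy by (auto simp: Sol_def)
  show "u *\<^sub>R x + v *\<^sub>R y \<in> Sol G K"
  proof (rule Minty_imp_Sol[OF assms(1,2)])
    show "u *\<^sub>R x + v *\<^sub>R y \<in> K" using convexD[OF assms(1) \<open>x \<in> K\<close> \<open>y \<in> K\<close> uv] .
    fix z assume z: "z \<in> K"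
    have "z - (u *\<^sub>R x + v *\<^sub>R y) = u *\<^sub>R (z - x) + v *\<^sub>R (z - y)"
      using uv(3) by (simp add: algebra_simps scaleR_add_left[symmetric])
    then have "inner (G z) (z - (u *\<^sub>R x + v *\<^sub>R y))
        = u * inner (G z) (z - x) + v * inner (G z) (z - y)"
      by (simp add: inner_add_right)
    also have "\<dots> \<ge> 0"
      using Sol_imp_Minty[OF assms(3) xy(1) z] Sol_imp_Minty[OF assms(3) xy(2) z] uv by simp
    finally show "0 \<le> inner (G z) (z - (u *\<^sub>R x + v *\<^sub>R y))" .
  qed
qed

text \<open>Hartman--Stampacchia: the solutions are the fixed points of \<open>x \<mapsto> closest_point K (x - G x)\<close>.\<close>
lemma Sol_nonempty_compact:
  fixes G :: "'a::euclidean_space \<Rightarrow> 'a"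
  assumes "compact K" "convex K" "K \<noteq> {}" "continuous_on K G"
  shows "Sol G K \<noteq> {}"
proof -
  have clK: "closed K" using assms(1) compact_imp_closed by auto
  have "continuous_on K (\<lambda>x. closest_point K (x - G x))"
    by (intro continuous_on_compose2[OF continuous_on_closest_point[OF assms(2) clK assms(3)]]
        continuous_intros assms(4)) auto
  then obtain x where x: "x \<in> K" "closest_point K (x - G x) = x"
    using brouwer[OF assms(1-3)] closest_point_in_set[OF clK assms(3)] by blast
  have "x \<in> Sol G K"
    unfolding Sol_def
  proof (intro CollectI conjI ballI)
    fix y assume "y \<in> K"
    from closest_point_dot[OF assms(2) clK this, of "x - G x"] x(2)
    show "0 \<le> inner (G x) (y - x)" by (simp add: inner_diff_left inner_minus_left)
  qed (fact x)
  then show ?thesis by auto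
qed

lemma Sol_Int_cball_imp_Sol:
  fixes G :: "'a::real_inner \<Rightarrow> 'a"
  assumes "convex K" "x \<in> Sol G (K \<inter> cball a R)" "dist a x < R"
  shows "x \<in> Sol G K"
  unfolding Sol_def
proof (intro CollectI conjI ballI)
  show xK: "x \<in> K" using assms(2) by (auto simp: Sol_def)
  fix y assume y: "y \<in> K"
  define s where "s = min 1 ((R - dist a x) / (norm (y - x) + 1))"
  have "0 < (R - dist a x) / (norm (y - x) + 1)"
    using assms(3) by (intro divide_pos_pos) (auto simp: add_nonneg_pos)
  then have s: "0 < s" "s \<le> 1" by (auto simp: s_def)
  have "dist a (x + s *\<^sub>R (y - x)) \<le> dist a x + s * norm (y - x)"
    using dist_triangle[of a "x + s *\<^sub>R (y - x)" x] s by (simp add: dist_norm)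
  also have "s * norm (y - x) \<le> ((R - dist a x) / (norm (y - x) + 1)) * norm (y - x)"
    by (rule mult_right_mono) (auto simp: s_def)
  also have "\<dots> \<le> R - dist a x"
    using assms(3) by (simp add: divide_simps add_nonneg_pos not_less)
  finally have "dist a (x + s *\<^sub>R (y - x)) \<le> R" by simp
  moreover have "x + s *\<^sub>R (y - x) \<in> K"
  proof -
    have "x + s *\<^sub>R (y - x) = (1 - s) *\<^sub>R x + s *\<^sub>R y" by (simp add: algebra_simps)
    then show ?thesis using convexD_alt[OF assms(1) xK y, of s] s by simp
  qed
  ultimately have "x + s *\<^sub>R (y - x) \<in> K \<inter> cball a R" by simp
  then have "0 \<le> inner (G x) (x + s *\<^sub>R (y - x) - x)"
    using assms(2) unfolding Sol_def by blast
  then have "0 \<le> s * inner (G x) (y - x)" by (simp add: inner_scaleR_right)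
  with s show "0 \<le> inner (G x) (y - x)" by (simp add: zero_le_mult_iff)
qed

definition recession_dir :: "'a::real_vector set \<Rightarrow> 'a \<Rightarrow> bool" where
  "recession_dir K d \<longleftrightarrow> (\<forall>x\<in>K. \<forall>t\<ge>0. x + t *\<^sub>R d \<in> K)"

lemma recession_dirI_ray:
  fixes K :: "'a::real_normed_vector set"
  assumes "closed K" "convex K" "a \<in> K" and ray: "\<And>s. s \<ge> 0 \<Longrightarrow> a + s *\<^sub>R d \<in> K"
  shows "recession_dir K d"
  unfolding recession_dir_def
proof (intro ballI allI impI)
  fix x t assume x: "x \<in> K" and t: "(t::real) \<ge> 0"
  \<comment> \<open>\<open>p n\<close> lies on the segment from \<open>x\<close> to \<open>a + (t + 1 + n) d\<close> and tends to \<open>x + t d\<close>.\<close>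
  define \<theta> where "\<theta> n = t / ((t + 1) + real n)" for n :: nat
  define p where "p n = x + t *\<^sub>R d + \<theta> n *\<^sub>R (a - x)" for n
  have "p n \<in> K" for n
  proof -
    have \<theta>: "0 \<le> \<theta> n" "\<theta> n \<le> 1" using t by (auto simp: \<theta>_def divide_simps)
    have "\<theta> n * ((t + 1) + real n) = t" using t by (simp add: \<theta>_def)
    then have "\<theta> n *\<^sub>R (a + ((t + 1) + real n) *\<^sub>R d) = \<theta> n *\<^sub>R a + t *\<^sub>R d"
      by (simp add: scaleR_add_right)
    then have "p n = (1 - \<theta> n) *\<^sub>R x + \<theta> n *\<^sub>R (a + ((t + 1) + real n) *\<^sub>R d)"
      by (simp add: p_def algebra_simps)
    then show ?thesis
      using convexD_alt[OF assms(2) x ray, of "(t + 1) + real n" "\<theta> n"] \<theta> t by simp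
  qed
  moreover have "\<theta> \<longlonglongrightarrow> 0" unfolding \<theta>_def
    by (intro tendsto_divide_0[OF tendsto_const] filterlim_at_top_imp_at_infinity
        filterlim_tendsto_add_at_top[OF tendsto_const filterlim_real_sequentially])
  then have "p \<longlonglongrightarrow> x + t *\<^sub>R d + 0 *\<^sub>R (a - x)" unfolding p_def by (intro tendsto_intros)
  ultimately show "x + t *\<^sub>R d \<in> K"
    using closed_sequentially[OF assms(1)] by fastforce
qed

lemma recession_dir_limit_sgn:
  fixes K :: "'a::real_normed_vector set"
  assumes "closed K" "convex K" "a \<in> K" "\<And>n. y n \<in> K"
    and diverge: "filterlim (\<lambda>n. norm (y n - a)) at_top sequentially"
    and lim: "(\<lambda>n. sgn (y n - a)) \<longlonglongrightarrow> d"
  shows "recession_dir K d"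
proof (rule recession_dirI_ray[OF assms(1-3)])
  fix s :: real assume s: "s \<ge> 0"
  have "eventually (\<lambda>n. s \<le> norm (y n - a)) sequentially"
    using diverge by (simp add: filterlim_at_top)
  then have ev: "eventually (\<lambda>n. a + s *\<^sub>R sgn (y n - a) \<in> K) sequentially"
  proof eventually_elim
    case (elim n)
    define \<theta> where "\<theta> = s / norm (y n - a)"
    have "0 \<le> \<theta>" "\<theta> \<le> 1" using s elim by (auto simp: \<theta>_def divide_simps)
    moreover have "a + s *\<^sub>R sgn (y n - a) = (1 - \<theta>) *\<^sub>R a + \<theta> *\<^sub>R y n"
      by (simp add: \<theta>_def sgn_div_norm divide_inverse algebra_simps)
    ultimately show ?case using convexD_alt[OF assms(2,3) assms(4)[of n]] by auto
  qed
  moreover have "(\<lambda>n. a + s *\<^sub>R sgn (y n - a)) \<longlonglongrightarrow> a + s *\<^sub>R d"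
    using lim by (intro tendsto_intros)
  ultimately show "a + s *\<^sub>R d \<in> K"
    by (rule Lim_in_closed_set[OF assms(1) _ trivial_limit_sequentially])
qed

lemma inner_limit_sgn_nonpos:
  fixes x :: "nat \<Rightarrow> 'a::real_inner"
  assumes upper: "eventually (\<lambda>n. inner g (x n - a) \<le> c) sequentially"
    and diverge: "filterlim (\<lambda>n. norm (x n - a)) at_top sequentially"
    and lim: "(\<lambda>n. sgn (x n - a)) \<longlonglongrightarrow> d"
  shows "inner g d \<le> 0"
proof -
  have "(\<lambda>n. inner g (sgn (x n - a))) \<longlonglongrightarrow> inner g d"
    using lim by (intro tendsto_intros)
  moreover have "(\<lambda>n. c / norm (x n - a)) \<longlonglongrightarrow> 0"
    by (rule tendsto_divide_0[OF tendsto_const filterlim_at_top_imp_at_infinity[OF diverge]])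
  moreover have "eventually (\<lambda>n. 1 \<le> norm (x n - a)) sequentially"
    using diverge by (simp add: filterlim_at_top)
  with upper have "eventually (\<lambda>n. inner g (sgn (x n - a)) \<le> c / norm (x n - a)) sequentially"
  proof eventually_elim
    case (elim n)
    then have "inner g (x n - a) / norm (x n - a) \<le> c / norm (x n - a)"
      by (simp add: divide_right_mono)
    then show ?case by (simp add: sgn_div_norm divide_inverse mult.commute)
  qed
  ultimately show ?thesis using tendsto_le[OF trivial_limit_sequentially] by blast
qed

text \<open>Solve the problem on the truncations \<open>K \<inter> cball a (n + 1)\<close>. If \<open>Sol G K = {}\<close>, each
  truncated solution lies on the bounding sphere, and a limit of their directions from \<open>a\<close> is a
  recession direction along which \<open>G\<close> is nonpositive by the Minty inequality.\<close>
lemma Sol_empty_imp_recession_dir: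
  fixes G :: "'a::euclidean_space \<Rightarrow> 'a"
  assumes K: "closed K" "convex K" "K \<noteq> {}"
    and cont: "continuous_on K G" and mono: "monotone_on_set G K"
    and empty: "Sol G K = {}"
  shows "\<exists>d. norm d = 1 \<and> recession_dir K d \<and> (\<forall>y\<in>K. inner (G y) d \<le> 0)"
proof -
  obtain a where a: "a \<in> K" using K(3) by blast
  have "Sol G (K \<inter> cball a (real n + 1)) \<noteq> {}" for n
    using a K cont
    by (intro Sol_nonempty_compact closed_Int_compact convex_Int)
      (auto intro: continuous_on_subset)
  then have "\<forall>n. \<exists>z. z \<in> Sol G (K \<inter> cball a (real n + 1))" by blast
  then obtain x where x: "\<And>n. x n \<in> Sol G (K \<inter> cball a (real n + 1))" by metis
  have xK: "x n \<in> K" and "dist a (x n) \<le> real n + 1" for n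
    using x[of n] by (auto simp: Sol_def)
  moreover have "\<not> dist a (x n) < real n + 1" for n
    using Sol_Int_cball_imp_Sol[OF K(2) x] empty by blast
  ultimately have dist_x: "norm (x n - a) = real n + 1" for n
    by (metis dist_norm norm_minus_commute not_less order.antisym)
  have "sgn (x n - a) \<in> sphere 0 1" for n
    using dist_x[of n] by (auto simp: norm_sgn)
  then obtain d r where d: "d \<in> sphere 0 1" "strict_mono r" "(\<lambda>n. sgn (x (r n) - a)) \<longlonglongrightarrow> d"
    using seq_compactE[OF compact_imp_seq_compact[OF compact_sphere[of 0 1]],
        of "\<lambda>n. sgn (x n - a)"]
    by (auto simp: o_def)
  have "filterlim (\<lambda>n. norm (x n - a)) at_top sequentially"
    unfolding dist_x
    by (intro filterlim_at_top_mono[OF filterlim_real_sequentially] always_eventually) simp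
  from filterlim_compose[OF this filterlim_subseq[OF d(2)]]
  have diverge: "filterlim (\<lambda>n. norm (x (r n) - a)) at_top sequentially" .
  have "recession_dir K d"
    by (rule recession_dir_limit_sgn[OF K(1,2) a xK diverge d(3)])
  moreover have "inner (G y) d \<le> 0" if y: "y \<in> K" for y
  proof (rule inner_limit_sgn_nonpos[OF _ diverge d(3)])
    have "eventually (\<lambda>n. dist a y \<le> norm (x (r n) - a)) sequentially"
      using diverge by (simp add: filterlim_at_top)
    then show "eventually (\<lambda>n. inner (G y) (x (r n) - a) \<le> inner (G y) (y - a)) sequentially"
    proof eventually_elim
      case (elim n)
      with y dist_x have "y \<in> K \<inter> cball a (real (r n) + 1)" by simp
      then have "inner (G y) (y - x (r n)) \<ge> 0"
        using Sol_imp_Minty[OF monotone_on_set_subset[OF mono] x] by blast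
      then show ?case by (simp add: inner_diff_right)
    qed
  qed
  ultimately show ?thesis using d(1) by auto
qed

lemma recession_dir_imp_Sol_unbounded:
  fixes G :: "'a::real_inner \<Rightarrow> 'a"
  assumes "convex K" "continuous_on K G" "monotone_on_set G K" "x \<in> Sol G K"
    and "recession_dir K d" "d \<noteq> 0" "\<forall>y\<in>K. inner (G y) d \<le> 0"
  shows "\<not> bounded (Sol G K)"
proof
  have xK: "x \<in> K" using assms(4) by (simp add: Sol_def)
  have ray: "x + t *\<^sub>R d \<in> Sol G K" if t: "t \<ge> 0" for t
  proof (rule Minty_imp_Sol[OF assms(1,2)])
    show "x + t *\<^sub>R d \<in> K" using assms(5) xK t by (simp add: recession_dir_def)
    fix y assume y: "y \<in> K"
    have "inner (G y) (y - x) \<ge> 0" using Sol_imp_Minty[OF assms(3,4) y] .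
    moreover have "t * inner (G y) d \<le> 0" using t assms(7) y by (simp add: mult_nonneg_nonpos)
    ultimately show "0 \<le> inner (G y) (y - (x + t *\<^sub>R d))"
      by (simp add: inner_diff_right inner_add_right)
  qed
  assume "bounded (Sol G K)"
  then obtain B where B: "\<And>z. z \<in> Sol G K \<Longrightarrow> norm z \<le> B" by (auto simp: bounded_iff)
  define t where "t = (\<bar>B\<bar> + norm x + 1) / norm d"
  have t: "t \<ge> 0" using assms(6) by (simp add: t_def)
  have "norm (t *\<^sub>R d) = \<bar>B\<bar> + norm x + 1" using assms(6) t by (simp add: t_def)
  then have "norm (x + t *\<^sub>R d) \<ge> \<bar>B\<bar> + 1"
    using norm_triangle_ineq2[of "t *\<^sub>R d" "- x"] by (simp add: add.commute)
  with B[OF ray[OF t]] show False by simp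
qed

lemma connected_UN_compact_Sigma:
  fixes S :: "'a::metric_space \<Rightarrow> 'b::metric_space set"
  assumes compact: "compact (SIGMA t:T. S t)" and "connected T"
    and fibres: "\<And>t. t \<in> T \<Longrightarrow> connected (S t)" "\<And>t. t \<in> T \<Longrightarrow> S t \<noteq> {}"
  shows "connected (\<Union>t\<in>T. S t)"
proof -
  let ?Gr = "SIGMA t:T. S t"
  have "connected (?Gr \<inter> fst -` T)"
  proof (rule connected_closed_monotone_preimage[of ?Gr fst T])
    show "fst ` ?Gr = T" using fibres(2) by force
    show "closedin (top_of_set T) (fst ` C)" if "closedin (top_of_set ?Gr) C" for C
    proof (rule closed_subset)
      show "fst ` C \<subseteq> T" using closedin_imp_subset[OF that] by auto
      show "closed (fst ` C)"
        using closedin_compact[OF compact that]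
        by (intro compact_imp_closed compact_continuous_image continuous_intros)
    qed
    show "connected (?Gr \<inter> fst -` {t})" if "t \<in> T" for t
    proof -
      have "?Gr \<inter> fst -` {t} = {t} \<times> S t" using that by auto
      then show ?thesis using fibres(1)[OF that] by (simp add: connected_Times)
    qed
  qed (auto intro: continuous_intros \<open>connected T\<close>)
  moreover have "?Gr \<inter> fst -` T = ?Gr" by auto
  ultimately have "connected (snd ` ?Gr)"
    by (intro connected_continuous_image continuous_intros) auto
  moreover have "snd ` ?Gr = (\<Union>t\<in>T. S t)" by force
  ultimately show ?thesis by simp
qed

definition lin_homotopy :: "('a::real_vector \<Rightarrow> 'a) \<Rightarrow> ('a \<Rightarrow> 'a) \<Rightarrow> real \<Rightarrow> 'a \<Rightarrow> 'a" where
  "lin_homotopy G0 G1 t x = (1 - t) *\<^sub>R G0 x + t *\<^sub>R G1 x"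

lemma lin_homotopy_0 [simp]: "lin_homotopy G0 G1 0 = G0"
  and lin_homotopy_1 [simp]: "lin_homotopy G0 G1 1 = G1"
  by (auto simp: lin_homotopy_def)

lemma continuous_on_lin_homotopy:
  fixes G0 :: "'a::real_normed_vector \<Rightarrow> 'a"
  assumes "continuous_on K G0" "continuous_on K G1"
  shows "continuous_on K (lin_homotopy G0 G1 t)"
  unfolding lin_homotopy_def by (intro continuous_intros assms)

lemma monotone_on_set_lin_homotopy:
  fixes G0 :: "'a::real_inner \<Rightarrow> 'a"
  assumes "monotone_on_set G0 K" "monotone_on_set G1 K" "t \<in> {0..1}"
  shows "monotone_on_set (lin_homotopy G0 G1 t) K"
  unfolding monotone_on_set_def
proof (intro ballI)
  fix x y assume xy: "x \<in> K" "y \<in> K"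
  have "inner (G0 y - G0 x) (y - x) \<ge> 0" "inner (G1 y - G1 x) (y - x) \<ge> 0"
    using assms(1,2) xy by (auto simp: monotone_on_set_def)
  moreover have "inner (lin_homotopy G0 G1 t y - lin_homotopy G0 G1 t x) (y - x)
      = (1 - t) * inner (G0 y - G0 x) (y - x) + t * inner (G1 y - G1 x) (y - x)"
    by (simp add: lin_homotopy_def inner_diff_left inner_add_left algebra_simps)
  ultimately show "0 \<le> inner (lin_homotopy G0 G1 t y - lin_homotopy G0 G1 t x) (y - x)"
    using assms(3) by simp
qed

lemma compact_Sol_lin_homotopy_graph:
  fixes G0 :: "'a::euclidean_space \<Rightarrow> 'a"
  assumes "closed K" "continuous_on K G0" "continuous_on K G1" "bounded B"
    and "\<And>t. t \<in> {0..1} \<Longrightarrow> Sol (lin_homotopy G0 G1 t) K \<subseteq> B"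
  shows "compact (SIGMA t:{0..1}. Sol (lin_homotopy G0 G1 t) K)" (is "compact ?Gr")
proof -
  let ?H = "\<lambda>p. lin_homotopy G0 G1 (fst p) (snd p)"
  have cont: "continuous_on ({0..1} \<times> K) ?H"
    unfolding lin_homotopy_def
    by (intro continuous_intros continuous_on_compose2[OF assms(2) continuous_on_snd]
        continuous_on_compose2[OF assms(3) continuous_on_snd]) auto
  have eq: "?Gr = ({0..1} \<times> K) \<inter> (\<Inter>y\<in>K. {p \<in> {0..1} \<times> K. 0 \<le> inner (?H p) (y - snd p)})"
    by (auto simp: Sol_def)
  have "closed {p \<in> {0..1} \<times> K. 0 \<le> inner (?H p) (y - snd p)}" for y
    by (intro continuous_on_closed_Collect_le continuous_intros cont closed_Times assms(1))
  then have "closed ?Gr"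
    unfolding eq by (intro closed_Int closed_INT closed_Times assms(1)) auto
  moreover have "bounded ?Gr"
    using assms(5)
    by (intro bounded_subset[OF bounded_Times[OF bounded_closed_interval assms(4)]]) blast
  ultimately show ?thesis by (simp add: compact_eq_bounded_closed)
qed

lemma closed_recession_params:
  fixes G0 :: "'a::euclidean_space \<Rightarrow> 'a"
  assumes "closed K"
  shows "closed {t \<in> {0..1}. \<exists>d. norm d = 1 \<and> recession_dir K d
                  \<and> (\<forall>y\<in>K. inner (lin_homotopy G0 G1 t y) d \<le> 0)}" (is "closed ?D")
proof -
  define Bad where "Bad = {(t, d). t \<in> {0..1} \<and> norm d = 1 \<and> recession_dir K d
                             \<and> (\<forall>y\<in>K. inner (lin_homotopy G0 G1 t y) d \<le> 0)}"
  have eq: "Bad = ({0..1} \<times> sphere 0 1)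
      \<inter> (\<Inter>x\<in>K. \<Inter>s\<in>{0..}. (\<lambda>p. x + s *\<^sub>R snd p) -` K)
      \<inter> (\<Inter>y\<in>K. {p. inner ((1 - fst p) *\<^sub>R G0 y + fst p *\<^sub>R G1 y) (snd p) \<le> 0})"
    by (auto simp: Bad_def recession_dir_def lin_homotopy_def)
  have "closed Bad"
    unfolding eq
    by (intro closed_Int closed_Times closed_atLeastAtMost closed_sphere closed_INT ballI
        continuous_closed_vimage assms closed_Collect_le continuous_intros)
  moreover have "bounded Bad"
    by (rule bounded_subset[of "{0..1} \<times> cball 0 1"]) (auto intro: bounded_Times simp: Bad_def)
  ultimately have "compact (fst ` Bad)"
    by (intro compact_continuous_image continuous_intros) (simp add: compact_eq_bounded_closed)
  moreover have "fst ` Bad = ?D" by (force simp: Bad_def)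
  ultimately show ?thesis by (simp add: compact_imp_closed)
qed

text \<open>Along the homotopy, \<open>t\<close> has a solution iff there is no unit recession direction on
  which \<open>G\<^sub>t\<close> is nonpositive; both sets of parameters are closed, so connectedness of
  \<open>{0..1}\<close> propagates solvability from \<open>t = 0\<close>.\<close>
lemma Sol_lin_homotopy_nonempty:
  fixes G0 :: "'a::euclidean_space \<Rightarrow> 'a"
  assumes K: "closed K" "convex K" "K \<noteq> {}"
    and cont: "continuous_on K G0" "continuous_on K G1"
    and mono: "monotone_on_set G0 K" "monotone_on_set G1 K"
    and bounded: "bounded B" "\<And>t. t \<in> {0..1} \<Longrightarrow> Sol (lin_homotopy G0 G1 t) K \<subseteq> B"
    and "Sol G0 K \<noteq> {}" and "t \<in> {0..1}"
  shows "Sol (lin_homotopy G0 G1 t) K \<noteq> {}"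
proof -
  let ?H = "lin_homotopy G0 G1"
  define T where "T = {t \<in> {0..1}. Sol (?H t) K \<noteq> {}}"
  define D where "D = {t \<in> {0..1}. \<exists>d. norm d = 1 \<and> recession_dir K d
                                      \<and> (\<forall>y\<in>K. inner (?H t y) d \<le> 0)}"
  have "T = fst ` (SIGMA t:{0..1}. Sol (?H t) K)" by (force simp: T_def)
  moreover have "compact (fst ` (SIGMA t:{0..1}. Sol (?H t) K))"
    using compact_Sol_lin_homotopy_graph[OF K(1) cont bounded]
    by (intro compact_continuous_image continuous_intros)
  ultimately have "closed T" by (simp add: compact_imp_closed)
  have "closed D" unfolding D_def by (rule closed_recession_params[OF K(1)])
  have T_iff: "s \<in> T \<longleftrightarrow> s \<notin> D" if s: "s \<in> {0..1}" for s
  proof -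
    have Hs: "continuous_on K (?H s)" "monotone_on_set (?H s) K"
      using continuous_on_lin_homotopy[OF cont] monotone_on_set_lin_homotopy[OF mono s] by auto
    have "s \<in> D" if "s \<notin> T"
      using Sol_empty_imp_recession_dir[OF K Hs] that s by (auto simp: T_def D_def)
    moreover have "s \<notin> D" if "s \<in> T"
    proof
      assume "s \<in> D"
      then obtain d where "norm d = 1" "recession_dir K d" "\<forall>y\<in>K. inner (?H s y) d \<le> 0"
        by (auto simp: D_def)
      moreover obtain x where "x \<in> Sol (?H s) K" using \<open>s \<in> T\<close> by (auto simp: T_def)
      ultimately have "\<not> bounded (Sol (?H s) K)"
        by (intro recession_dir_imp_Sol_unbounded[OF K(2) Hs]) auto
      then show False using bounded_subset[OF bounded(1) bounded(2)[OF s]] by simp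
    qed
    ultimately show ?thesis by blast
  qed
  have "{0..1} \<subseteq> T \<union> D" "T \<inter> D \<inter> {0..1} = {}" using T_iff by auto
  moreover have "T \<inter> {0..1} \<noteq> {}"
    using \<open>Sol G0 K \<noteq> {}\<close> by (auto simp: T_def intro!: exI[of _ 0])
  ultimately have "D \<inter> {0..1} = {}"
    using connected_Icc[of "0::real" 1] \<open>closed T\<close> \<open>closed D\<close> unfolding connected_closed by blast
  then show ?thesis using T_iff[OF \<open>t \<in> {0..1}\<close>] \<open>t \<in> {0..1}\<close> by (auto simp: T_def)
qed

lemma connected_UN_Sol_lin_homotopy:
  fixes G0 :: "'a::euclidean_space \<Rightarrow> 'a"
  assumes K: "closed K" "convex K" "K \<noteq> {}"
    and cont: "continuous_on K G0" "continuous_on K G1"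
    and mono: "monotone_on_set G0 K" "monotone_on_set G1 K"
    and bounded: "bounded B" "\<And>t. t \<in> {0..1} \<Longrightarrow> Sol (lin_homotopy G0 G1 t) K \<subseteq> B"
    and "Sol G0 K \<noteq> {}"
  shows "connected (\<Union>t\<in>{0..1}. Sol (lin_homotopy G0 G1 t) K)"
proof (rule connected_UN_compact_Sigma)
  show "compact (SIGMA t:{0..1}. Sol (lin_homotopy G0 G1 t) K)"
    by (rule compact_Sol_lin_homotopy_graph[OF K(1) cont bounded])
  show "connected (Sol (lin_homotopy G0 G1 t) K)" if "t \<in> {0..1}" for t
    by (intro convex_connected convex_Sol K(2) continuous_on_lin_homotopy cont
        monotone_on_set_lin_homotopy mono that)
  show "Sol (lin_homotopy G0 G1 t) K \<noteq> {}" if "t \<in> {0..1}" for t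
    by (rule Sol_lin_homotopy_nonempty[OF assms that])
qed simp

lemma simplex_Delta_sum_pos:
  fixes \<xi> :: "'m::finite \<Rightarrow> real"
  assumes "\<xi> \<in> simplex_Delta" "\<And>l. 0 < c l"
  shows "0 < (\<Sum>l\<in>UNIV. \<xi> l * c l)"
proof -
  obtain l0 where "\<xi> l0 \<noteq> 0"
    using assms(1) by (force simp: simplex_Delta_def)
  then have "0 < \<xi> l0" using assms(1) by (simp add: simplex_Delta_def order_less_le)
  then show ?thesis
    using assms by (intro sum_pos2[where i=l0]) (auto simp: simplex_Delta_def less_imp_le)
qed

lemma pos_orthant_lower_bound:
  fixes a :: "real^'m::finite"
  assumes lower: "\<And>p. (\<And>l. 0 < p $ l) \<Longrightarrow> b \<le> inner a p"
  shows "0 \<le> a $ l" and "b \<le> 0"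
proof -
  define S where "S = (\<Sum>l\<in>UNIV. a $ l)"
  have "inner a 1 = S" by (simp add: S_def inner_vec_def)
  have probe: "b \<le> e * S + M * a $ k" if "0 < e" "0 \<le> M" for e M k
  proof -
    have "b \<le> inner a (e *\<^sub>R 1 + M *\<^sub>R axis k 1)"
      using that by (intro lower) (auto simp: axis_def add_pos_nonneg)
    also have "\<dots> = e * S + M * a $ k"
      using \<open>inner a 1 = S\<close> by (simp add: inner_add_right inner_axis mult.commute)
    finally show ?thesis .
  qed
  show "0 \<le> a $ l"
  proof (rule ccontr)
    assume "\<not> 0 \<le> a $ l"
    then have "b \<le> 1 * S + ((\<bar>S\<bar> + \<bar>b\<bar> + 1) / - a $ l) * a $ l"
      by (intro probe) (auto intro: divide_nonneg_neg)
    with \<open>\<not> 0 \<le> a $ l\<close> show False by simp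
  qed
  show "b \<le> 0"
  proof (rule ccontr)
    assume "\<not> b \<le> 0"
    define e where "e = b / (2 * (\<bar>S\<bar> + 1))"
    have "0 < e" using \<open>\<not> b \<le> 0\<close> by (simp add: e_def add_pos_nonneg)
    then have "b \<le> e * S + 0 * a $ l" by (intro probe) auto
    also have "e * S \<le> e * (\<bar>S\<bar> + 1)" using \<open>0 < e\<close> by (intro mult_left_mono) auto
    also have "\<dots> = b / 2"
      unfolding e_def using abs_ge_zero[of S] by (simp add: field_simps)
    finally show False using \<open>\<not> b \<le> 0\<close> by simp
  qed
qed

lemma separating_weights_pos_orthant:
  fixes C :: "(real^'m::finite) set"
  assumes "convex C" "C \<noteq> {}" and not_pos: "\<And>c. c \<in> C \<Longrightarrow> \<exists>l. c $ l \<le> 0"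
  shows "\<exists>\<xi>\<in>simplex_Delta. \<forall>c\<in>C. (\<Sum>l\<in>UNIV. \<xi> l * c $ l) \<le> 0"
proof -
  define P where "P = {v::real^'m. \<forall>l. 0 < v $ l}"
  have "P = (\<Inter>l. {v. inner (axis l 1) v > 0})" by (auto simp: P_def inner_axis')
  then have "convex P" by (simp add: convex_INT convex_halfspace_gt)
  moreover have "(1::real^'m) \<in> P" by (simp add: P_def)
  moreover have "C \<inter> P = {}"
  proof -
    have "c \<notin> P" if "c \<in> C" for c
      using not_pos[OF that] by (auto simp: P_def not_less)
    then show ?thesis by blast
  qed
  ultimately obtain a b where "a \<noteq> 0"
    and C_le: "\<forall>c\<in>C. inner a c \<le> b" and P_ge: "\<forall>p\<in>P. b \<le> inner a p"
    using separating_hyperplane_sets[OF assms(1) _ assms(2)] by blast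
  have a_nonneg: "0 \<le> a $ l" for l
    using pos_orthant_lower_bound(1)[of b a] P_ge by (auto simp: P_def)
  have "b \<le> 0"
    using pos_orthant_lower_bound(2)[of b a] P_ge by (auto simp: P_def)
  define S where "S = (\<Sum>l\<in>UNIV. a $ l)"
  have "0 < S"
  proof -
    obtain l where "a $ l \<noteq> 0" using \<open>a \<noteq> 0\<close> by (auto simp: vec_eq_iff)
    then show ?thesis
      unfolding S_def using a_nonneg by (intro sum_pos2[where i=l]) (auto simp: order_less_le)
  qed
  define \<xi> where "\<xi> l = a $ l / S" for l
  have "\<xi> \<in> simplex_Delta"
    using a_nonneg \<open>0 < S\<close> by (simp add: simplex_Delta_def \<xi>_def S_def flip: sum_divide_distrib)
  moreover have "(\<Sum>l\<in>UNIV. \<xi> l * c $ l) \<le> 0" if "c \<in> C" for c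
  proof -
    have "(\<Sum>l\<in>UNIV. \<xi> l * c $ l) = inner a c / S"
      by (simp add: \<xi>_def inner_vec_def sum_divide_distrib)
    moreover have "inner a c \<le> 0" using C_le \<open>b \<le> 0\<close> that by fastforce
    ultimately show ?thesis using \<open>0 < S\<close> by (simp add: divide_nonpos_pos)
  qed
  ultimately show ?thesis by blast
qed

lemma inner_Fxi_left: "inner (Fxi F \<xi> x) u = (\<Sum>l\<in>UNIV. \<xi> l * inner (F l x) u)"
  by (simp add: Fxi_def inner_sum_left)

lemma Fxi_convex_comb:
  "Fxi F (\<lambda>l. (1 - t) * \<xi>0 l + t * \<xi> l) = lin_homotopy (Fxi F \<xi>0) (Fxi F \<xi>) t"
  by (rule ext) (simp add: Fxi_def lin_homotopy_def scaleR_add_left sum.distrib scaleR_sum_right)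

lemma simplex_Delta_convex_comb:
  assumes "\<xi>0 \<in> simplex_Delta" "\<xi> \<in> simplex_Delta" "t \<in> {0..1::real}"
  shows "(\<lambda>l. (1 - t) * \<xi>0 l + t * \<xi> l) \<in> simplex_Delta"
  using assms by (auto simp: simplex_Delta_def sum.distrib sum_distrib_left[symmetric])

lemma continuous_on_Fxi:
  fixes F :: "'m::finite \<Rightarrow> 'a::real_normed_vector \<Rightarrow> 'a"
  assumes "\<And>l. continuous_on K (F l)"
  shows "continuous_on K (Fxi F \<xi>)"
  unfolding Fxi_def by (intro continuous_intros assms)

lemma monotone_on_set_Fxi:
  fixes F :: "'m::finite \<Rightarrow> 'a::real_inner \<Rightarrow> 'a"
  assumes "\<And>l. monotone_on_set (F l) K" "\<xi> \<in> simplex_Delta"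
  shows "monotone_on_set (Fxi F \<xi>) K"
  unfolding monotone_on_set_def
proof (intro ballI)
  fix x y assume "x \<in> K" "y \<in> K"
  then have "0 \<le> (\<Sum>l\<in>UNIV. \<xi> l * inner (F l y - F l x) (y - x))"
    using assms by (intro sum_nonneg mult_nonneg_nonneg)
      (auto simp: simplex_Delta_def monotone_on_set_def)
  also have "\<dots> = inner (Fxi F \<xi> y - Fxi F \<xi> x) (y - x)"
    by (simp add: inner_diff_left inner_Fxi_left right_diff_distrib sum_subtractf)
  finally show "0 \<le> inner (Fxi F \<xi> y - Fxi F \<xi> x) (y - x)" .
qed

lemma interior_nonneg_orthant: "interior nonneg_orthant = {v::real^'m::finite. \<forall>l. 0 < v $ l}"
proof
  show "interior nonneg_orthant \<subseteq> {v::real^'m. \<forall>l. 0 < v $ l}"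
  proof
    fix v :: "real^'m" assume "v \<in> interior nonneg_orthant"
    then obtain e where e: "e > 0" "ball v e \<subseteq> nonneg_orthant" by (meson mem_interior)
    have "0 < v $ l" for l
    proof -
      have "v - (e/2) *\<^sub>R axis l 1 \<in> ball v e" using e(1) by (simp add: dist_norm)
      then have "v - (e/2) *\<^sub>R axis l 1 \<in> nonneg_orthant" using e(2) by blast
      then have "0 \<le> (v - (e/2) *\<^sub>R axis l 1) $ l" unfolding nonneg_orthant_def by blast
      then show "0 < v $ l" using e(1) by simp
    qed
    then show "v \<in> {v. \<forall>l. 0 < v $ l}" by blast
  qed
  have "{v::real^'m. \<forall>l. 0 < v $ l} = (\<Inter>l. {v. v $ l > 0})" by auto
  then have "open {v::real^'m. \<forall>l. 0 < v $ l}"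
    by (simp add: open_INT open_halfspace_component_gt_cart)
  then show "{v::real^'m. \<forall>l. 0 < v $ l} \<subseteq> interior nonneg_orthant"
    by (rule interior_maximal[rotated]) (auto simp: nonneg_orthant_def less_imp_le)
qed

lemma Sol_Fxi_subset_SolW:
  assumes "\<xi> \<in> simplex_Delta"
  shows "Sol (Fxi F \<xi>) K \<subseteq> SolW F K"
proof
  fix x assume x: "x \<in> Sol (Fxi F \<xi>) K"
  have "vecF F x (x - y) \<notin> interior nonneg_orthant" if y: "y \<in> K" for y
  proof
    assume "vecF F x (x - y) \<in> interior nonneg_orthant"
    then have "0 < (\<Sum>l\<in>UNIV. \<xi> l * inner (F l x) (x - y))"
      by (intro simplex_Delta_sum_pos[OF assms]) (simp add: interior_nonneg_orthant vecF_def)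
    also have "\<dots> = - inner (Fxi F \<xi> x) (y - x)"
      by (simp add: inner_Fxi_left inner_diff_right sum_subtractf right_diff_distrib)
    finally show False using x y unfolding Sol_def by fastforce
  qed
  with x show "x \<in> SolW F K" by (simp add: Sol_def SolW_def)
qed

text \<open>The image of \<open>K\<close> under \<open>y \<mapsto> F(x)(x - y)\<close> is convex and misses the open orthant; the
  normalized separating functional gives the weights.\<close>
lemma SolW_imp_Sol_Fxi:
  assumes "x \<in> SolW F K" "convex K"
  shows "\<exists>\<xi>\<in>simplex_Delta. x \<in> Sol (Fxi F \<xi>) K"
proof -
  have "x \<in> K" using assms(1) by (simp add: SolW_def)
  have "linear (vecF F x)"
    by (auto simp: linear_iff vecF_def vec_eq_iff inner_add_right)
  then have "(\<lambda>y. vecF F x (x - y)) ` K = (+) (vecF F x x) ` uminus ` vecF F x ` K"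
    by (auto simp: image_image linear_diff)
  then have "convex ((\<lambda>y. vecF F x (x - y)) ` K)"
    using \<open>linear (vecF F x)\<close> assms(2)
    by (simp add: convex_translation convex_negations convex_linear_image)
  moreover have "\<exists>l. c $ l \<le> 0" if "c \<in> (\<lambda>y. vecF F x (x - y)) ` K" for c
    using that assms(1) by (force simp: SolW_def interior_nonneg_orthant not_less)
  ultimately obtain \<xi> where "\<xi> \<in> simplex_Delta"
    and \<xi>: "\<forall>y\<in>K. (\<Sum>l\<in>UNIV. \<xi> l * inner (F l x) (x - y)) \<le> 0"
    using separating_weights_pos_orthant[of "(\<lambda>y. vecF F x (x - y)) ` K"] \<open>x \<in> K\<close>
    by (auto simp: vecF_def)
  have "0 \<le> inner (Fxi F \<xi> x) (y - x)" if "y \<in> K" for y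
    using \<xi> that by (simp add: inner_Fxi_left inner_diff_right sum_subtractf right_diff_distrib)
  with \<open>\<xi> \<in> simplex_Delta\<close> \<open>x \<in> K\<close> show ?thesis by (auto simp: Sol_def)
qed

definition Sol_segment ::
    "('m::finite \<Rightarrow> 'a::real_inner \<Rightarrow> 'a) \<Rightarrow> 'a set \<Rightarrow> ('m \<Rightarrow> real) \<Rightarrow> ('m \<Rightarrow> real) \<Rightarrow> 'a set" where
  "Sol_segment F K \<xi>0 \<xi> = (\<Union>t\<in>{0..1}. Sol (Fxi F (\<lambda>l. (1 - t) * \<xi>0 l + t * \<xi> l)) K)"

lemma Sol_Fxi_subset_Sol_segment:
  "Sol (Fxi F \<xi>0) K \<subseteq> Sol_segment F K \<xi>0 \<xi>" "Sol (Fxi F \<xi>) K \<subseteq> Sol_segment F K \<xi>0 \<xi>"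
proof -
  have "Sol (Fxi F (\<lambda>l. (1 - t) * \<xi>0 l + t * \<xi> l)) K \<subseteq> Sol_segment F K \<xi>0 \<xi>" if "t \<in> {0..1}" for t
    unfolding Sol_segment_def using that by (rule UN_upper)
  from this[of 0] this[of 1]
  show "Sol (Fxi F \<xi>0) K \<subseteq> Sol_segment F K \<xi>0 \<xi>" "Sol (Fxi F \<xi>) K \<subseteq> Sol_segment F K \<xi>0 \<xi>"
    by simp_all
qed

lemma Sol_segment_subset_SolW:
  assumes "\<xi>0 \<in> simplex_Delta" "\<xi> \<in> simplex_Delta"
  shows "Sol_segment F K \<xi>0 \<xi> \<subseteq> SolW F K"
  using Sol_Fxi_subset_SolW[OF simplex_Delta_convex_comb[OF assms]]
  unfolding Sol_segment_def by blast

lemma SolW_eq_UN_Sol_segment: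
  assumes "convex K" "\<xi>0 \<in> simplex_Delta"
  shows "SolW F K = (\<Union>\<xi>\<in>simplex_Delta. Sol_segment F K \<xi>0 \<xi>)"
proof
  show "SolW F K \<subseteq> (\<Union>\<xi>\<in>simplex_Delta. Sol_segment F K \<xi>0 \<xi>)"
  proof
    fix z assume "z \<in> SolW F K"
    then obtain \<xi> where "\<xi> \<in> simplex_Delta" "z \<in> Sol (Fxi F \<xi>) K"
      using SolW_imp_Sol_Fxi[OF _ assms(1)] by blast
    then show "z \<in> (\<Union>\<xi>\<in>simplex_Delta. Sol_segment F K \<xi>0 \<xi>)"
      using Sol_Fxi_subset_Sol_segment(2) by blast
  qed
  show "(\<Union>\<xi>\<in>simplex_Delta. Sol_segment F K \<xi>0 \<xi>) \<subseteq> SolW F K"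
    by (rule UN_least) (rule Sol_segment_subset_SolW[OF assms(2)])
qed

lemma Sol_segment_connected_nonempty:
  fixes K :: "(real^'n) set" and F :: "'m::finite \<Rightarrow> real^'n \<Rightarrow> real^'n"
  assumes K: "closed K" "convex K" "K \<noteq> {}"
    and F: "\<And>l. continuous_on K (F l)" "\<And>l. monotone_on_set (F l) K"
    and "bounded (SolW F K)"
    and \<xi>: "\<xi>0 \<in> simplex_Delta" "\<xi> \<in> simplex_Delta" and "Sol (Fxi F \<xi>0) K \<noteq> {}"
  shows "connected (Sol_segment F K \<xi>0 \<xi>)" and "Sol (Fxi F \<xi>) K \<noteq> {}"
proof -
  have cont: "continuous_on K (Fxi F \<xi>0)" "continuous_on K (Fxi F \<xi>)"
    by (intro continuous_on_Fxi F(1))+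
  have mono: "monotone_on_set (Fxi F \<xi>0) K" "monotone_on_set (Fxi F \<xi>) K"
    by (intro monotone_on_set_Fxi F(2) \<xi>)+
  have "Sol (lin_homotopy (Fxi F \<xi>0) (Fxi F \<xi>) t) K \<subseteq> SolW F K" if "t \<in> {0..1}" for t
    using Sol_Fxi_subset_SolW[OF simplex_Delta_convex_comb[OF \<xi> that]]
    by (simp add: Fxi_convex_comb)
  note hyps = K cont mono \<open>bounded (SolW F K)\<close> this \<open>Sol (Fxi F \<xi>0) K \<noteq> {}\<close>
  show "connected (Sol_segment F K \<xi>0 \<xi>)"
    using connected_UN_Sol_lin_homotopy[OF hyps] by (simp add: Sol_segment_def Fxi_convex_comb)
  show "Sol (Fxi F \<xi>) K \<noteq> {}"
    using Sol_lin_homotopy_nonempty[OF hyps, of 1] by simp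
qed

theorem theorem3:
  fixes K :: "(real^'n) set" and F :: "'m::finite \<Rightarrow> real^'n \<Rightarrow> real^'n"
  assumes "K \<noteq> {}" and "closed K" and "convex K"
    and "\<And>l. continuous_on K (F l)"
    and "\<And>l. monotone_on_set (F l) K"
    and "bounded (SolW F K)" and "SolW F K \<noteq> {}"
  shows "connected (SolW F K) \<and> (\<forall>\<xi>\<in>simplex_Delta. Sol (Fxi F \<xi>) K \<noteq> {})"
proof -
  obtain x0 \<xi>0 where \<xi>0: "\<xi>0 \<in> simplex_Delta" and x0: "x0 \<in> Sol (Fxi F \<xi>0) K"
    using SolW_imp_Sol_Fxi[OF _ assms(3)] assms(7) by blast
  then have "Sol (Fxi F \<xi>0) K \<noteq> {}" by blast
  note segment = Sol_segment_connected_nonempty[OF assms(2,3,1,4,5,6) \<xi>0 _ this]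
  have "SolW F K = (\<Union>\<xi>\<in>simplex_Delta. Sol_segment F K \<xi>0 \<xi>)"
    by (rule SolW_eq_UN_Sol_segment[OF assms(3) \<xi>0])
  moreover have "connected (\<Union>\<xi>\<in>simplex_Delta. Sol_segment F K \<xi>0 \<xi>)"
  proof (rule connected_Union)
    have "x0 \<in> Sol_segment F K \<xi>0 \<xi>" for \<xi>
      using Sol_Fxi_subset_Sol_segment(1) x0 by (rule subsetD)
    then show "\<Inter>((Sol_segment F K \<xi>0) ` simplex_Delta) \<noteq> {}" by blast
  qed (use segment(1) in blast)
  ultimately show ?thesis using segment(2) by simp
qed

end
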